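(* Every countably compact hereditarily normal topological group that contains a non-trivial convergent sequence is metrizable.
   Context: All spaces are assumed to be $T_1$. A non-trivial convergent sequence is a subspace homeomorphic to the subspace $\{0\}\cup\{1/n : n=1,2,3,\dots\}$ of the real line. *)

theory Defs
  imports "HOL-Analysis.Analysis" "HOL-Algebra.Group"
begin

definition topological_group :: "('a, 'b) monoid_scheme \<Rightarrow> 'a topology \<Rightarrow> bool" where
  "topological_group G X \<longleftrightarrow>
     group G \<and> topspace X = carrier G \<and>
     continuous_map (prod_topology X X) X (\<lambda>p. fst p \<otimes>\<^bsub>G\<^esub> snd p) \<and>
     continuous_map X X (\<lambda>x. inv\<^bsub>G\<^esub> x)"

definition countably_compact_space :: "'a topology \<Rightarrow> bool" where
  "countably_compact_space X \<longleftrightarrow>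
     (\<forall>\<U>. countable \<U> \<and> (\<forall>U\<in>\<U>. openin X U) \<and> topspace X \<subseteq> \<Union>\<U>
        \<longrightarrow> (\<exists>\<F>\<subseteq>\<U>. finite \<F> \<and> topspace X \<subseteq> \<Union>\<F>))"

definition conv_seq_space :: "real topology" where
  "conv_seq_space = subtopology euclideanreal ({0} \<union> {1 / real n | n. n \<ge> 1})"

definition has_nontrivial_convergent_sequence :: "'a topology \<Rightarrow> bool" where
  "has_nontrivial_convergent_sequence X \<longleftrightarrow>
     (\<exists>S \<subseteq> topspace X. subtopology X S homeomorphic_space conv_seq_space)"

end

theory Submission
  imports Defs
begin

(* Let x_k -> p be a non-trivial convergent sequence and separate each x_k from p by disjoint
   open sets P_k and R_k. By hereditary normality the sequence and the points outside all P_k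
   other than p have disjoint open neighbourhoods V and U. Since x_k p^-1 y -> y, no point y
   other than p lies in every set R_k \<inter> (x_k p^-1)^-1 V, so {p} is a G-delta, and by homogeneity
   so is {1}. In a countably compact regular space a G-delta point has a countable neighbourhood
   base. As finitely many translates of any neighbourhood of 1 cover a countably compact group,
   the group is second countable, hence compact, and a compact Hausdorff second countable space
   embeds in R^nat by countably many Urysohn functions. *)

section \<open>Countably compact spaces\<close>

lemma countably_compact_space_cover_nat:
  fixes U :: "nat \<Rightarrow> 'a set"
  assumes cc: "countably_compact_space X" and "openin X U0" and "\<And>n. openin X (U n)"
    and cover: "topspace X \<subseteq> U0 \<union> (\<Union>n. U n)"
  obtains M where "topspace X \<subseteq> U0 \<union> (\<Union>n<M. U n)"
proof -
  have "countable (insert U0 (range U))"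
    by simp
  moreover have "\<forall>V\<in>insert U0 (range U). openin X V"
    using assms(2,3) by blast
  moreover have "topspace X \<subseteq> \<Union>(insert U0 (range U))"
    using cover by simp
  ultimately obtain \<F> where \<F>: "\<F> \<subseteq> insert U0 (range U)" "finite \<F>" "topspace X \<subseteq> \<Union>\<F>"
    using cc unfolding countably_compact_space_def by meson
  obtain C where C: "finite C" "\<F> - {U0} = U ` C"
    using finite_subset_image[of "\<F> - {U0}" U UNIV] \<F>(1,2) by auto
  obtain M where "C \<subseteq> {..<M}"
    using finite_nat_bounded[OF C(1)] by blast
  then have "\<Union>\<F> \<subseteq> U0 \<union> (\<Union>n<M. U n)"
    using C(2) by blast
  with \<F>(3) have "topspace X \<subseteq> U0 \<union> (\<Union>n<M. U n)"
    by (rule order_trans)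
  then show thesis
    by (rule that)
qed

lemma sequence_avoiding_predecessors:
  assumes "\<And>F. finite F \<Longrightarrow> F \<subseteq> A \<Longrightarrow> \<exists>y\<in>A. \<forall>d\<in>F. R d y"
  obtains g :: "nat \<Rightarrow> 'a" where "\<And>k. g k \<in> A" "\<And>j k. j < k \<Longrightarrow> R (g j) (g k)"
proof -
  have "\<exists>g :: nat \<Rightarrow> 'a. \<forall>k. g k \<in> A \<and> (\<forall>j<k. R (g j) (g k))"
  proof (rule dependent_wf_choice[OF wf_less, where P = "\<lambda>g k r. r \<in> A \<and> (\<forall>j<k. R (g j) r)"])
    fix k and g :: "nat \<Rightarrow> 'a"
    assume "\<And>j. (j, k) \<in> {(x, y). x < y} \<Longrightarrow> g j \<in> A \<and> (\<forall>i<j. R (g i) (g j))"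
    then have "g ` {..<k} \<subseteq> A"
      by auto
    then show "\<exists>r. r \<in> A \<and> (\<forall>j<k. R (g j) r)"
      using assms[of "g ` {..<k}"] by auto
  qed auto
  then show thesis
    using that by blast
qed

lemma countably_compact_second_countable_imp_compact_space:
  assumes "second_countable X" and cc: "countably_compact_space X"
  shows "compact_space X"
  unfolding compact_space_alt
proof (intro allI impI)
  fix \<U> assume \<U>: "(\<forall>U\<in>\<U>. openin X U) \<and> topspace X \<subseteq> \<Union>\<U>"
  then have "\<Union>\<U> = topspace X"
    using openin_subset by blast
  moreover have "Lindelof_space X"
    using \<open>second_countable X\<close> by (rule second_countable_imp_Lindelof_space)
  ultimately obtain \<V> where \<V>: "countable \<V>" "\<V> \<subseteq> \<U>" "\<Union>\<V> = topspace X"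
    using \<U> unfolding Lindelof_space_def by meson
  moreover have "\<forall>V\<in>\<V>. openin X V"
    using \<U> \<V>(2) by blast
  moreover have "topspace X \<subseteq> \<Union>\<V>"
    using \<V>(3) by simp
  ultimately obtain \<F> where "\<F> \<subseteq> \<V>" "finite \<F>" "topspace X \<subseteq> \<Union>\<F>"
    using cc unfolding countably_compact_space_def by meson
  with \<V>(2) show "\<exists>\<F>. finite \<F> \<and> \<F> \<subseteq> \<U> \<and> topspace X \<subseteq> \<Union>\<F>"
    by blast
qed

lemma regular_space_closure_of_subset_open:
  assumes "regular_space X" "openin X W" "x \<in> W"
  obtains U where "openin X U" "x \<in> U" "X closure_of U \<subseteq> W"
proof -
  obtain U C where "openin X U" "closedin X C" "x \<in> U" "U \<subseteq> C" "C \<subseteq> W"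
    using assms neighbourhood_base_of_closedin[of X] unfolding neighbourhood_base_of by metis
  moreover have "X closure_of U \<subseteq> C"
    using \<open>U \<subseteq> C\<close> \<open>closedin X C\<close> by (rule closure_of_minimal)
  ultimately show thesis
    using that \<open>C \<subseteq> W\<close> by (meson order_trans)
qed

lemma gdelta_in_INT_openin:
  fixes C :: "nat \<Rightarrow> 'a set"
  shows "(\<And>n. openin X (C n)) \<Longrightarrow> gdelta_in X (\<Inter>(range C))"
  by (intro gdelta_in_Inter open_imp_gdelta_in) auto

lemma countably_compact_closures_INT_subset:
  fixes V :: "nat \<Rightarrow> 'a set"
  assumes cc: "countably_compact_space X" and "openin X U"
    and V: "\<And>n. V n \<subseteq> topspace X" "\<And>m n. m \<le> n \<Longrightarrow> V n \<subseteq> V m"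
    and "(\<Inter>n. X closure_of V n) \<subseteq> U"
  shows "\<exists>n. V n \<subseteq> U"
proof -
  have cover: "topspace X \<subseteq> U \<union> (\<Union>n. topspace X - X closure_of V n)"
  proof
    fix y assume "y \<in> topspace X"
    moreover have "y \<in> U" if "\<forall>n. y \<in> X closure_of V n"
      using that assms(5) by blast
    ultimately show "y \<in> U \<union> (\<Union>n. topspace X - X closure_of V n)"
      by blast
  qed
  have "openin X (topspace X - X closure_of V n)" for n
    by (simp add: openin_diff)
  then obtain M where M: "topspace X \<subseteq> U \<union> (\<Union>n<M. topspace X - X closure_of V n)"
    by (rule countably_compact_space_cover_nat[OF cc \<open>openin X U\<close> _ cover])
  have "V M \<subseteq> U"
  proof
    fix y assume y: "y \<in> V M"
    have "y \<in> X closure_of V n" if "n < M" for n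
      using V(2)[of n M] that y closure_of_subset[OF V(1)] by auto
    moreover have "y \<in> topspace X"
      using y V(1) by blast
    ultimately show "y \<in> U"
      using M by blast
  qed
  then show ?thesis ..
qed

lemma countably_compact_regular_gdelta_point_nbhd_base:
  assumes cc: "countably_compact_space X" and reg: "regular_space X" and "gdelta_in X {a}"
  obtains V :: "nat \<Rightarrow> 'a set"
  where "\<And>n. openin X (V n)" "\<And>n. a \<in> V n"
    "\<And>U. openin X U \<Longrightarrow> a \<in> U \<Longrightarrow> \<exists>n. V n \<subseteq> U"
proof -
  obtain C :: "nat \<Rightarrow> 'a set" where C: "\<And>n. openin X (C n)" "\<Inter>(range C) = {a}"
    using \<open>gdelta_in X {a}\<close> unfolding gdelta_in_descending by blast
  have "a \<in> C n" for n
    using C(2) by blast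
  then have "\<exists>P. openin X P \<and> a \<in> P \<and> X closure_of P \<subseteq> C n" for n
    by (meson regular_space_closure_of_subset_open[OF reg C(1)])
  then obtain P where P: "\<And>n. openin X (P n)" "\<And>n. a \<in> P n" "\<And>n. X closure_of (P n) \<subseteq> C n"
    by metis
  define V where "V n = \<Inter>(P ` {..n})" for n
  have V: "openin X (V n)" "a \<in> V n" "V n \<subseteq> P n" for n
    unfolding V_def using P(1,2) by (auto intro!: openin_Inter)
  have V_antimono: "V n \<subseteq> V m" if "m \<le> n" for m n
    using that by (auto simp: V_def)
  have "X closure_of V n \<subseteq> C n" for n
    using closure_of_mono[OF V(3)] P(3) by (rule order_trans)
  then have closures: "(\<Inter>n. X closure_of V n) \<subseteq> {a}"
    unfolding C(2)[symmetric] by (rule INF_mono')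
  show thesis
  proof (rule that[OF V(1,2)])
    fix U assume U: "openin X U" "a \<in> U"
    then have "(\<Inter>n. X closure_of V n) \<subseteq> U"
      by (intro order_trans[OF closures]) simp
    then show "\<exists>n. V n \<subseteq> U"
      using countably_compact_closures_INT_subset[OF cc U(1), of V] openin_subset[OF V(1)] V_antimono by blast
  qed
qed

section \<open>Convergent sequences in hereditarily normal spaces\<close>

lemma has_nontrivial_convergent_sequence_imp_limitin:
  assumes "has_nontrivial_convergent_sequence X"
  obtains x :: "nat \<Rightarrow> 'a" and p
  where "\<And>k. x k \<in> topspace X" "\<And>k. x k \<noteq> p" "limitin X x p sequentially"
proof -
  define T where "T = {0} \<union> {1 / real n | n. n \<ge> 1}"
  obtain S where "subtopology X S homeomorphic_space subtopology euclideanreal T"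
    using assms unfolding has_nontrivial_convergent_sequence_def conv_seq_space_def T_def by blast
  then obtain \<phi> \<psi> where hm: "homeomorphic_maps (subtopology euclideanreal T) (subtopology X S) \<phi> \<psi>"
    using homeomorphic_space_sym unfolding homeomorphic_space_def by metis
  then have \<phi>: "continuous_map (subtopology euclideanreal T) X \<phi>"
    unfolding homeomorphic_maps_def using continuous_map_in_subtopology by blast
  define a where "a k = 1 / real (Suc k)" for k
  have aT: "a k \<in> T" for k
    unfolding T_def a_def by force
  have "0 \<in> T"
    by (simp add: T_def)
  have "a \<longlonglongrightarrow> 0"
    unfolding a_def using LIMSEQ_inverse_real_of_nat by (simp add: inverse_eq_divide)
  then have "limitin (subtopology euclideanreal T) a 0 sequentially"
    using aT \<open>0 \<in> T\<close> by (simp add: limitin_subtopology)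
  then have "limitin X (\<phi> \<circ> a) (\<phi> 0) sequentially"
    by (rule continuous_map_limit[OF \<phi>])
  moreover have "\<phi> (a k) \<in> topspace X" for k
    using \<phi> aT by (auto simp: continuous_map_def Pi_iff)
  moreover have "\<phi> (a k) \<noteq> \<phi> 0" for k
  proof
    assume "\<phi> (a k) = \<phi> 0"
    moreover have "\<forall>t\<in>T. \<psi> (\<phi> t) = t"
      using hm unfolding homeomorphic_maps_def by simp
    ultimately have "a k = 0"
      using aT \<open>0 \<in> T\<close> by metis
    then show False
      by (simp add: a_def)
  qed
  ultimately show thesis
    using that[of "\<phi> \<circ> a" "\<phi> 0"] by simp
qed

lemma hereditarily_normal_convergent_sequence_separation:
  assumes "Hausdorff_space X" and hn: "hereditarily normal_space X"
    and x: "\<And>k. x k \<in> topspace X" "\<And>k. x k \<noteq> p" and lim: "limitin X x p sequentially"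
  obtains R :: "nat \<Rightarrow> 'a set" and U V where "\<And>k. openin X (R k)" "\<And>k. p \<in> R k" "openin X U" "openin X V"
    "range x \<subseteq> V" "disjnt U V"
    "\<And>y. y \<in> topspace X \<Longrightarrow> y \<noteq> p \<Longrightarrow> (\<forall>k. y \<in> R k) \<Longrightarrow> y \<in> U"
proof -
  have p: "p \<in> topspace X"
    using lim by (rule limitin_topspace)
  have "compactin X (insert p (range x))"
    using compactin_sequence_with_limit[OF lim order_refl] x(1) by auto
  then have closure_x: "X closure_of range x \<subseteq> insert p (range x)"
    using \<open>Hausdorff_space X\<close> by (intro closure_of_minimal compactin_imp_closedin) auto
  have "\<exists>P R. openin X P \<and> openin X R \<and> x k \<in> P \<and> p \<in> R \<and> disjnt P R" for k
    using \<open>Hausdorff_space X\<close> x p unfolding Hausdorff_space_def by metis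
  then obtain P R where PR: "\<And>k. openin X (P k)" "\<And>k. openin X (R k)" "\<And>k. x k \<in> P k"
    "\<And>k. p \<in> R k" "\<And>k. disjnt (P k) (R k)"
    by metis
  define N where "N = topspace X - (\<Union>k. P k)"
  have "closedin X N"
    unfolding N_def using PR(1) by (intro closedin_diff closedin_topspace openin_Union) auto
  have "separatedin X (N - {p}) (range x)"
    unfolding separatedin_def
  proof (intro conjI)
    show "N - {p} \<subseteq> topspace X" "range x \<subseteq> topspace X"
      using x(1) by (auto simp: N_def)
    show "(N - {p}) \<inter> X closure_of range x = {}"
      using closure_x PR(3) by (auto simp: N_def)
    have "X closure_of (N - {p}) \<subseteq> N"
      using \<open>closedin X N\<close> by (intro closure_of_minimal) auto
    then show "range x \<inter> X closure_of (N - {p}) = {}"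
      using PR(3) by (auto simp: N_def)
  qed
  then obtain U V where UV: "openin X U" "openin X V" "N - {p} \<subseteq> U" "range x \<subseteq> V" "disjnt U V"
    using hn unfolding hereditarily_normal_separation by metis
  show thesis
  proof (rule that[OF PR(2,4) UV(1,2,4,5)])
    fix y assume "y \<in> topspace X" "y \<noteq> p" "\<forall>k. y \<in> R k"
    then have "y \<in> N - {p}"
      using PR(5) by (auto simp: N_def disjnt_def)
    then show "y \<in> U"
      using UV(3) by blast
  qed
qed

section \<open>Compact second countable Hausdorff spaces are metrizable\<close>

lemma second_countable_normal_separating_functions:
  assumes sc: "second_countable X" and nor: "normal_space X" and t1: "t1_space X"
  obtains u :: "nat \<Rightarrow> 'a \<Rightarrow> real"
  where "\<And>n. continuous_map X euclideanreal (u n)"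
    "\<And>x y. x \<in> topspace X \<Longrightarrow> y \<in> topspace X \<Longrightarrow> x \<noteq> y \<Longrightarrow> \<exists>n. u n x \<noteq> u n y"
proof -
  obtain \<B> where \<B>: "countable \<B>" "\<And>V. V \<in> \<B> \<Longrightarrow> openin X V"
    "\<And>U x. openin X U \<Longrightarrow> x \<in> U \<Longrightarrow> \<exists>V \<in> \<B>. x \<in> V \<and> V \<subseteq> U"
    using sc unfolding second_countable_def by metis
  define urysohn where "urysohn B1 B2 g \<longleftrightarrow> continuous_map X euclideanreal g \<and>
      (openin X B2 \<and> X closure_of B1 \<subseteq> B2 \<longrightarrow>
         g ` (X closure_of B1) \<subseteq> {0} \<and> g ` (topspace X - B2) \<subseteq> {1})"
    for B1 B2 and g :: "'a \<Rightarrow> real"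
  have "\<exists>g. urysohn B1 B2 g" for B1 B2
  proof (cases "openin X B2 \<and> X closure_of B1 \<subseteq> B2")
    case True
    then have "closedin X (topspace X - B2)" "disjnt (X closure_of B1) (topspace X - B2)"
      by (auto simp: disjnt_def)
    then show ?thesis
      unfolding urysohn_def using Urysohn_lemma_alt[OF nor closedin_closure_of] by metis
  next
    case False
    then show ?thesis
      unfolding urysohn_def by (metis continuous_map_const topspace_euclidean UNIV_I)
  qed
  then obtain f where f: "\<And>B1 B2. urysohn B1 B2 (f B1 B2)"
    by metis
  show thesis
  proof
    show "continuous_map X euclideanreal (case_prod f (from_nat_into (\<B> \<times> \<B>) n))" for n
      using f by (simp add: urysohn_def split_beta)
    fix x y assume x: "x \<in> topspace X" and y: "y \<in> topspace X" and "x \<noteq> y"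
    then have "openin X (topspace X - {y})"
      using t1 by (simp add: t1_space_openin_delete_alt)
    then obtain B2 where B2: "B2 \<in> \<B>" "x \<in> B2" "B2 \<subseteq> topspace X - {y}"
      using \<B>(3) x \<open>x \<noteq> y\<close> by blast
    have "regular_space X"
      using nor t1 by (rule normal_t1_imp_regular_space)
    then obtain W where W: "openin X W" "x \<in> W" "X closure_of W \<subseteq> B2"
      using \<B>(2)[OF B2(1)] B2(2) by (rule regular_space_closure_of_subset_open)
    obtain B1 where B1: "B1 \<in> \<B>" "x \<in> B1" "B1 \<subseteq> W"
      using \<B>(3)[OF W(1,2)] by blast
    have "X closure_of B1 \<subseteq> B2"
      using closure_of_mono[OF B1(3)] W(3) by blast
    then have "f B1 B2 ` (X closure_of B1) \<subseteq> {0}" "f B1 B2 ` (topspace X - B2) \<subseteq> {1}"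
      using f \<B>(2)[OF B2(1)] unfolding urysohn_def by blast+
    moreover have "x \<in> X closure_of B1"
      using B1(2) x by (auto simp: in_closure_of)
    moreover have "y \<in> topspace X - B2"
      using y B2(3) by blast
    ultimately have "f B1 B2 x = 0" "f B1 B2 y = 1"
      by blast+
    then have "f B1 B2 x \<noteq> f B1 B2 y"
      by simp
    moreover have "from_nat_into (\<B> \<times> \<B>) (to_nat_on (\<B> \<times> \<B>) (B1, B2)) = (B1, B2)"
      using \<B>(1) B1(1) B2(1) by simp
    ultimately show "\<exists>n. case_prod f (from_nat_into (\<B> \<times> \<B>) n) x \<noteq>
        case_prod f (from_nat_into (\<B> \<times> \<B>) n) y"
      by (metis case_prod_conv)
  qed
qed

lemma compact_Hausdorff_separating_functions_imp_metrizable_space: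
  fixes u :: "nat \<Rightarrow> 'a \<Rightarrow> real"
  assumes "compact_space X" "Hausdorff_space X" and u: "\<And>n. continuous_map X euclideanreal (u n)"
    and sep: "\<And>x y. x \<in> topspace X \<Longrightarrow> y \<in> topspace X \<Longrightarrow> x \<noteq> y \<Longrightarrow> \<exists>n. u n x \<noteq> u n y"
  shows "metrizable_space X"
proof -
  define F where "F x = (\<lambda>n. u n x)" for x
  have F: "continuous_map X (powertop_real UNIV) F"
    unfolding F_def continuous_map_componentwise_UNIV using u by blast
  have "inj_on F (topspace X)"
    using sep by (force simp: inj_on_def F_def fun_eq_iff)
  moreover have "closed_map X (powertop_real UNIV) F"
    using F \<open>compact_space X\<close> by (simp add: continuous_imp_closed_map Hausdorff_space_product_topology)
  ultimately have "embedding_map X (powertop_real UNIV) F"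
    using F by (intro injective_closed_imp_embedding_map)
  then have "X homeomorphic_space subtopology (powertop_real UNIV) (F ` topspace X)"
    by (rule embedding_map_imp_homeomorphic_space)
  moreover have "metrizable_space (subtopology (powertop_real (UNIV :: nat set)) (F ` topspace X))"
    by (simp add: metrizable_space_product_topology metrizable_space_euclidean metrizable_space_subtopology)
  ultimately show ?thesis
    using homeomorphic_metrizable_space by blast
qed

lemma compact_Hausdorff_second_countable_imp_metrizable_space:
  assumes "compact_space X" "Hausdorff_space X" "second_countable X"
  shows "metrizable_space X"
proof -
  have "normal_space X"
    using assms by (simp add: compact_Hausdorff_or_regular_imp_normal_space)
  then obtain u :: "nat \<Rightarrow> 'a \<Rightarrow> real" where "\<And>n. continuous_map X euclideanreal (u n)"
    "\<And>x y. x \<in> topspace X \<Longrightarrow> y \<in> topspace X \<Longrightarrow> x \<noteq> y \<Longrightarrow> \<exists>n. u n x \<noteq> u n y"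
    using second_countable_normal_separating_functions Hausdorff_imp_t1_space assms by metis
  with assms show ?thesis
    by (intro compact_Hausdorff_separating_functions_imp_metrizable_space)
qed

section \<open>Countably compact topological groups\<close>

locale topgroup = group G for G (structure) + fixes X :: "'a topology"
  assumes topspace_eq: "topspace X = carrier G"
    and continuous_map_mult_pair: "continuous_map (prod_topology X X) X (\<lambda>p. fst p \<otimes> snd p)"
    and continuous_map_inv_self: "continuous_map X X (\<lambda>x. inv x)"

lemma topological_group_imp_topgroup: "topological_group G X \<Longrightarrow> topgroup G X"
  by (simp add: topological_group_def topgroup_def topgroup_axioms_def)

context topgroup
begin

lemma continuous_map_mult:
  assumes "continuous_map Y X f" "continuous_map Y X g"
  shows "continuous_map Y X (\<lambda>x. f x \<otimes> g x)"
  using continuous_map_compose[OF continuous_map_pairedI[OF assms] continuous_map_mult_pair]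
  by (simp add: o_def)

lemma continuous_map_inv: "continuous_map Y X f \<Longrightarrow> continuous_map Y X (\<lambda>x. inv (f x))"
  using continuous_map_compose[OF _ continuous_map_inv_self] by (simp add: o_def)

lemma continuous_map_const_carrier: "a \<in> carrier G \<Longrightarrow> continuous_map Y X (\<lambda>x. a)"
  by (simp add: topspace_eq)

lemma openin_preimage:
  "continuous_map X X h \<Longrightarrow> openin X U \<Longrightarrow> openin X {x \<in> carrier G. h x \<in> U}"
  using openin_continuous_map_preimage[of X X h U] by (simp add: topspace_eq)

lemma continuous_map_left_translate: "a \<in> carrier G \<Longrightarrow> continuous_map X X (\<lambda>y. a \<otimes> y)"
  using continuous_map_mult[OF continuous_map_const_carrier continuous_map_id] by (simp add: id_def)

lemma openin_left_translate:
  "a \<in> carrier G \<Longrightarrow> openin X U \<Longrightarrow> openin X {y \<in> carrier G. a \<otimes> y \<in> U}"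
  by (rule openin_preimage[OF continuous_map_left_translate])

lemma one_nbhd_inv_mult_subset:
  assumes "openin X U" "\<one> \<in> U"
  obtains W where "openin X W" "\<one> \<in> W" "\<And>a b. a \<in> W \<Longrightarrow> b \<in> W \<Longrightarrow> inv a \<otimes> b \<in> U"
proof -
  define S where "S = {p \<in> topspace (prod_topology X X). inv (fst p) \<otimes> snd p \<in> U}"
  have "continuous_map (prod_topology X X) X (\<lambda>p. inv (fst p) \<otimes> snd p)"
    by (rule continuous_map_mult[OF continuous_map_inv[OF continuous_map_fst] continuous_map_snd])
  then have "openin (prod_topology X X) S"
    unfolding S_def using \<open>openin X U\<close> by (rule openin_continuous_map_preimage)
  moreover have "(\<one>, \<one>) \<in> S"
    using \<open>\<one> \<in> U\<close> by (simp add: S_def topspace_eq)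
  ultimately have "\<exists>A B. openin X A \<and> openin X B \<and> \<one> \<in> A \<and> \<one> \<in> B \<and> A \<times> B \<subseteq> S"
    by (rule openin_prod_topology_alt[THEN iffD1, rule_format])
  then obtain A B where AB: "openin X A" "openin X B" "\<one> \<in> A" "\<one> \<in> B" "A \<times> B \<subseteq> S"
    by blast
  show thesis
  proof (rule that[of "A \<inter> B"])
    show "openin X (A \<inter> B)" "\<one> \<in> A \<inter> B"
      using AB(1-4) by auto
    show "inv a \<otimes> b \<in> U" if "a \<in> A \<inter> B" "b \<in> A \<inter> B" for a b
    proof -
      have "(a, b) \<in> S"
        using that AB(5) by blast
      then show ?thesis
        by (simp add: S_def)
    qed
  qed
qed

lemma in_closure_of_translate_nbhd:
  assumes "y \<in> X closure_of D" "openin X V" "\<one> \<in> V"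
  obtains d where "d \<in> D" "inv d \<otimes> y \<in> V"
proof -
  have y: "y \<in> carrier G"
    using assms(1) in_closure_of topspace_eq by fastforce
  define N where "N = {z \<in> carrier G. inv z \<otimes> y \<in> V}"
  have "continuous_map X X (\<lambda>z. inv z \<otimes> y)"
    using y by (intro continuous_map_mult continuous_map_inv continuous_map_const_carrier) simp_all
  then have "openin X N"
    unfolding N_def using assms(2) by (rule openin_preimage)
  moreover have "y \<in> N"
    using y assms(3) by (simp add: N_def)
  ultimately obtain d where "d \<in> D" "d \<in> N"
    using assms(1) unfolding in_closure_of by blast
  then show thesis
    using that by (simp add: N_def)
qed

lemma countably_compact_finite_translates_cover:
  assumes cc: "countably_compact_space X" and V: "openin X V" "\<one> \<in> V"
  shows "\<exists>F. finite F \<and> F \<subseteq> carrier G \<and> (\<forall>y\<in>carrier G. \<exists>d\<in>F. inv d \<otimes> y \<in> V)"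
proof (rule ccontr)
  assume no_cover: "\<nexists>F. finite F \<and> F \<subseteq> carrier G \<and> (\<forall>y\<in>carrier G. \<exists>d\<in>F. inv d \<otimes> y \<in> V)"
  have "\<exists>y\<in>carrier G. \<forall>d\<in>F. inv d \<otimes> y \<notin> V" if "finite F" "F \<subseteq> carrier G" for F
    using no_cover that by meson
  then obtain g :: "nat \<Rightarrow> 'a"
    where g: "\<And>k. g k \<in> carrier G" "\<And>j k. j < k \<Longrightarrow> inv (g j) \<otimes> g k \<notin> V"
    using sequence_avoiding_predecessors[of "carrier G" "\<lambda>d y. inv d \<otimes> y \<notin> V"] by metis
  (* The complement of the closure of the g k and their translates g k V form a countable open
     cover; a finite subcover indexed below M cannot contain g M. *)
  define T where "T k = {y \<in> carrier G. inv (g k) \<otimes> y \<in> V}" for k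
  have "openin X (T k)" for k
    unfolding T_def using g(1) V(1) by (intro openin_left_translate) simp
  moreover have "topspace X \<subseteq> (topspace X - X closure_of range g) \<union> (\<Union>k. T k)"
  proof
    fix y assume y: "y \<in> topspace X"
    show "y \<in> (topspace X - X closure_of range g) \<union> (\<Union>k. T k)"
    proof (cases "y \<in> X closure_of range g")
      case True
      then obtain k where "inv (g k) \<otimes> y \<in> V"
        using V by (metis in_closure_of_translate_nbhd rangeE)
      with y have "y \<in> T k"
        by (simp add: T_def topspace_eq)
      then show ?thesis
        by blast
    next
      case False
      with y show ?thesis
        by blast
    qed
  qed
  ultimately obtain M where M: "topspace X \<subseteq> (topspace X - X closure_of range g) \<union> (\<Union>k<M. T k)"
    by (rule countably_compact_space_cover_nat[OF cc openin_diff[OF openin_topspace closedin_closure_of]])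
  have "range g \<subseteq> topspace X"
    using g(1) by (auto simp: topspace_eq)
  then have "g M \<in> X closure_of range g"
    using closure_of_subset by blast
  moreover have "g M \<in> topspace X"
    using g(1) by (simp add: topspace_eq)
  moreover have "g M \<notin> T k" if "k < M" for k
    using g(2)[OF that] by (simp add: T_def)
  moreover have "g M \<in> (topspace X - X closure_of range g) \<union> (\<Union>k<M. T k)"
    using M \<open>g M \<in> topspace X\<close> by (rule subsetD)
  ultimately show False
    by simp
qed

lemma countably_compact_gdelta_one_imp_second_countable:
  assumes cc: "countably_compact_space X" and "regular_space X" "gdelta_in X {\<one>}"
  shows "second_countable X"
proof -
  obtain V :: "nat \<Rightarrow> 'a set" where V: "\<And>n. openin X (V n)" "\<And>n. \<one> \<in> V n"
    and V_base: "\<And>U. openin X U \<Longrightarrow> \<one> \<in> U \<Longrightarrow> \<exists>n. V n \<subseteq> U"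
    using countably_compact_regular_gdelta_point_nbhd_base[OF cc assms(2,3)] by metis
  obtain F where F: "\<And>n. finite (F n)" "\<And>n. F n \<subseteq> carrier G"
    "\<And>n y. y \<in> carrier G \<Longrightarrow> \<exists>d\<in>F n. inv d \<otimes> y \<in> V n"
    using countably_compact_finite_translates_cover[OF cc V(1,2)] by metis
  define T where "T n d = {y \<in> carrier G. inv d \<otimes> y \<in> V n}" for n d
  define \<B> where "\<B> = (\<Union>n. T n ` F n)"
  have "countable \<B>"
    unfolding \<B>_def using F(1) by (intro countable_UN countable_image) (auto intro: countable_finite)
  moreover have "\<forall>W\<in>\<B>. openin X W"
    unfolding \<B>_def T_def using F(2) V(1) openin_left_translate by blast
  moreover have "\<exists>W\<in>\<B>. x \<in> W \<and> W \<subseteq> U" if U: "openin X U" "x \<in> U" for U x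
  proof -
    have x: "x \<in> carrier G"
      using U openin_subset topspace_eq by blast
    have "openin X {y \<in> carrier G. x \<otimes> y \<in> U}" "\<one> \<in> {y \<in> carrier G. x \<otimes> y \<in> U}"
      using x U by (simp_all add: openin_left_translate)
    then obtain m where m: "V m \<subseteq> {y \<in> carrier G. x \<otimes> y \<in> U}"
      using V_base by blast
    obtain W where W: "openin X W" "\<one> \<in> W"
      "\<And>a b. a \<in> W \<Longrightarrow> b \<in> W \<Longrightarrow> inv a \<otimes> b \<in> V m"
      using one_nbhd_inv_mult_subset[OF V(1) V(2)] by metis
    obtain n where n: "V n \<subseteq> W"
      using V_base[OF W(1,2)] by blast
    obtain d where d: "d \<in> F n" "inv d \<otimes> x \<in> V n"
      using F(3)[OF x] by blast
    have "T n d \<subseteq> U"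
    proof
      fix y assume "y \<in> T n d"
      then have y: "y \<in> carrier G" "inv d \<otimes> y \<in> V n"
        by (auto simp: T_def)
      have d_carrier: "d \<in> carrier G"
        using d(1) F(2) by blast
      have "inv (inv d \<otimes> x) \<otimes> (inv d \<otimes> y) = inv x \<otimes> y"
        using d_carrier x y(1) by (simp add: inv_mult_group m_assoc[symmetric]) (simp add: m_assoc)
      moreover have "inv (inv d \<otimes> x) \<otimes> (inv d \<otimes> y) \<in> V m"
        using W(3) n d(2) y(2) by blast
      ultimately have "x \<otimes> (inv x \<otimes> y) \<in> U"
        using m by auto
      then show "y \<in> U"
        using x y(1) by (simp add: m_assoc[symmetric])
    qed
    moreover have "x \<in> T n d" "T n d \<in> \<B>"
      using x d by (auto simp: T_def \<B>_def)
    ultimately show ?thesis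
      by blast
  qed
  ultimately show ?thesis
    unfolding second_countable_def by metis
qed

lemma gdelta_in_singleton_translate:
  assumes a: "a \<in> carrier G" and b: "b \<in> carrier G" and "gdelta_in X {a}"
  shows "gdelta_in X {b}"
proof -
  obtain C :: "nat \<Rightarrow> 'a set" where C: "\<And>n. openin X (C n)" "\<Inter>(range C) = {a}"
    using \<open>gdelta_in X {a}\<close> unfolding gdelta_in_descending by blast
  define c where "c = a \<otimes> inv b"
  have c: "c \<in> carrier G" "c \<otimes> b = a"
    using a b by (simp_all add: c_def m_assoc)
  define C' where "C' n = {y \<in> carrier G. c \<otimes> y \<in> C n}" for n
  have "openin X (C' n)" for n
    unfolding C'_def using c(1) C(1) by (rule openin_left_translate)
  moreover have "\<Inter>(range C') = {b}"
  proof -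
    have "y \<in> \<Inter>(range C') \<longleftrightarrow> y \<in> carrier G \<and> c \<otimes> y = c \<otimes> b" for y
      using C(2) c(2) by (auto simp: C'_def)
    then show ?thesis
      using b c(1) by auto
  qed
  ultimately show ?thesis
    using gdelta_in_INT_openin by metis
qed

lemma hereditarily_normal_sequence_limit_gdelta:
  assumes "Hausdorff_space X" "hereditarily normal_space X"
    and x: "\<And>k. x k \<in> carrier G" "\<And>k. x k \<noteq> p" and lim: "limitin X x p sequentially"
  shows "gdelta_in X {p}"
proof -
  have p: "p \<in> carrier G"
    using limitin_topspace[OF lim] by (simp add: topspace_eq)
  obtain R :: "nat \<Rightarrow> 'a set" and U V where R: "\<And>k. openin X (R k)" "\<And>k. p \<in> R k" and UV: "openin X U" "openin X V"
    "range x \<subseteq> V" "disjnt U V"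
    "\<And>y. y \<in> topspace X \<Longrightarrow> y \<noteq> p \<Longrightarrow> (\<forall>k. y \<in> R k) \<Longrightarrow> y \<in> U"
    using hereditarily_normal_convergent_sequence_separation[OF assms(1,2) _ x(2) lim] x(1) topspace_eq
    by metis
  define Q where "Q k = R k \<inter> {y \<in> carrier G. (x k \<otimes> inv p) \<otimes> y \<in> V}" for k
  have "openin X (Q k)" for k
    unfolding Q_def using x(1) p R(1) UV(2) by (intro openin_Int openin_left_translate) auto
  moreover have "\<Inter>(range Q) = {p}"
  proof
    show "{p} \<subseteq> \<Inter>(range Q)"
      using R(2) UV(3) x(1) p by (auto simp: Q_def m_assoc)
    show "\<Inter>(range Q) \<subseteq> {p}"
    proof
      fix y assume "y \<in> \<Inter>(range Q)"
      then have y: "y \<in> carrier G" "\<And>k. y \<in> R k" "\<And>k. (x k \<otimes> inv p) \<otimes> y \<in> V"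
        by (auto simp: Q_def)
      show "y \<in> {p}"
      proof (rule ccontr)
        assume "y \<notin> {p}"
        then have "y \<in> U"
          using y(1,2) UV(5) by (simp add: topspace_eq)
        have "continuous_map X X (\<lambda>z. (z \<otimes> inv p) \<otimes> y)"
          using p y(1) by (intro continuous_map_mult continuous_map_const_carrier) auto
        then have "limitin X (\<lambda>k. (x k \<otimes> inv p) \<otimes> y) ((p \<otimes> inv p) \<otimes> y) sequentially"
          using continuous_map_limit[OF _ lim] by (simp add: o_def)
        then have "limitin X (\<lambda>k. (x k \<otimes> inv p) \<otimes> y) y sequentially"
          using p y(1) by simp
        then obtain k where "(x k \<otimes> inv p) \<otimes> y \<in> U"
          using UV(1) \<open>y \<in> U\<close> unfolding limitin_def eventually_sequentially by blast
        with y(3)[of k] UV(4) show False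
          unfolding disjnt_def by blast
      qed
    qed
  qed
  ultimately show ?thesis
    using gdelta_in_INT_openin by metis
qed

lemma nontrivial_convergent_sequence_imp_gdelta_one:
  assumes "Hausdorff_space X" "hereditarily normal_space X" "has_nontrivial_convergent_sequence X"
  shows "gdelta_in X {\<one>}"
proof -
  obtain x :: "nat \<Rightarrow> 'a" and p
    where x: "\<And>k. x k \<in> topspace X" "\<And>k. x k \<noteq> p" "limitin X x p sequentially"
    using has_nontrivial_convergent_sequence_imp_limitin[OF assms(3)] by metis
  have "x k \<in> carrier G" for k
    using x(1) by (simp add: topspace_eq)
  then have "gdelta_in X {p}"
    by (rule hereditarily_normal_sequence_limit_gdelta[OF assms(1,2) _ x(2,3)])
  moreover have "p \<in> carrier G"
    using limitin_topspace[OF x(3)] by (simp add: topspace_eq)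
  ultimately show ?thesis
    using gdelta_in_singleton_translate one_closed by blast
qed

end

theorem corollary2p5:
  fixes G :: "('a, 'b) monoid_scheme" and X :: "'a topology"
  assumes "topological_group G X"
    and "t1_space X"
    and "countably_compact_space X"
    and "hereditarily normal_space X"
    and "has_nontrivial_convergent_sequence X"
  shows "metrizable_space X"
proof -
  interpret topgroup G X
    using assms(1) by (rule topological_group_imp_topgroup)
  have "regular_space X"
    using hereditarily_inc[OF assms(4)] assms(2) by (rule normal_t1_imp_regular_space)
  then have "Hausdorff_space X"
    using assms(2) by (rule regular_t1_imp_Hausdorff_space)
  then have "gdelta_in X {\<one>\<^bsub>G\<^esub>}"
    using assms(4,5) by (rule nontrivial_convergent_sequence_imp_gdelta_one)
  then have "second_countable X"
    by (rule countably_compact_gdelta_one_imp_second_countable[OF assms(3) \<open>regular_space X\<close>])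
  moreover have "compact_space X"
    using calculation assms(3) by (rule countably_compact_second_countable_imp_compact_space)
  ultimately show ?thesis
    using \<open>Hausdorff_space X\<close> by (intro compact_Hausdorff_second_countable_imp_metrizable_space)
qed

end
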